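(* Let $\mathbb{F}\in\{\mathbb{R},\mathbb{C}\}$ and let $\mathcal{P}(M,N)$ be the set of Parseval frames for $\mathbb{F}^N$ with $M$ vectors. For each $M>N$ there exist constants $0<c\leq d<1$, depending only on $M$ and $N$, such that whenever $\Phi=\{\varphi_i\}_{i=1}^M\in\mathcal{P}(M,N)$ maximizes $TC$ over $\mathcal{P}(M,N)$, we have $c\leq\|\varphi_i\|\leq d$ for every $i=1,\dots,M$.
   Context: A Parseval frame for $\mathbb{F}^N$ is a family $\{\varphi_i\}_{i=1}^M\subseteq\mathbb{F}^N$ whose $N\times M$ matrix $\Phi$ (columns $\varphi_i$) satisfies $\Phi\Phi^*=I$. The total coherence is $TC(\Phi)=\sum_{i\neq j}|\langle\varphi_i,\varphi_j\rangle|$. *)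

theory Defs
  imports Complex_Main
begin

text \<open>Vectors of F^N are represented as functions nat => complex (coordinates k < N);
  a family of M vectors is Phi :: nat => nat => complex, with Phi i the i-th vector
  (i < M) and Phi i k its k-th coordinate. The field F is encoded by a coefficient
  set K, with K = Reals (F = R) or K = UNIV (F = C).\<close>

definition frame_inner :: "nat \<Rightarrow> (nat \<Rightarrow> complex) \<Rightarrow> (nat \<Rightarrow> complex) \<Rightarrow> complex" where
  "frame_inner N x y = (\<Sum>k<N. x k * cnj (y k))"

definition frame_vnorm :: "nat \<Rightarrow> (nat \<Rightarrow> complex) \<Rightarrow> real" where
  "frame_vnorm N x = sqrt (\<Sum>k<N. (cmod (x k))\<^sup>2)"

definition parseval_frames :: "complex set \<Rightarrow> nat \<Rightarrow> nat \<Rightarrow> (nat \<Rightarrow> nat \<Rightarrow> complex) set" where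
  "parseval_frames K M N =
     {Phi. (\<forall>i<M. \<forall>k<N. Phi i k \<in> K)
         \<and> (\<forall>i k. (M \<le> i \<or> N \<le> k) \<longrightarrow> Phi i k = 0)
         \<and> (\<forall>k<N. \<forall>l<N. (\<Sum>i<M. Phi i k * cnj (Phi i l)) = (if k = l then 1 else 0))}"

definition total_coherence :: "nat \<Rightarrow> nat \<Rightarrow> (nat \<Rightarrow> nat \<Rightarrow> complex) \<Rightarrow> real" where
  "total_coherence M N Phi =
     (\<Sum>i<M. \<Sum>j<M. if i \<noteq> j then cmod (frame_inner N (Phi i) (Phi j)) else 0)"

end

theory Submission
  imports Defs "HOL-Analysis.Convex"
begin

text \<open>The Gram matrix G of a Parseval frame is an orthogonal projection. Hence the squared
  norms n_i = G_ii sum to N and the off-diagonal part of row i has squared length n_i - n_i^2,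
  so by Cauchy-Schwarz its l1 norm S_i is at most sqrt (M n_i (1 - n_i)). Replacing phi_i, phi_j
  by (phi_i + phi_j) / sqrt 2 and (phi_j - phi_i) / sqrt 2 keeps the frame Parseval and
  changes the total coherence by at least |n_j - n_i| - 4 S_i. At a maximizer this gives
  (n_j - n_i)^2 \<le> 16 M n_i (1 - n_i) for all j \<noteq> i. As the mean of the n_a is N/M, some
  n_j lies at or above N/M and some at or below, so n_i stays away from 0 and from 1.\<close>

lemma sum_split_pair:
  fixes f :: "nat \<Rightarrow> 'b::comm_monoid_add"
  assumes "i \<noteq> j" "i < M" "j < M"
  shows "(\<Sum>a<M. f a) = f i + f j + (\<Sum>a\<in>{..<M}-{i,j}. f a)"
proof -
  have "(\<Sum>a<M. f a) = f i + (\<Sum>a\<in>{..<M}-{i}. f a)"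
    using assms by (simp add: sum.remove)
  also have "(\<Sum>a\<in>{..<M}-{i}. f a) = f j + (\<Sum>a\<in>{..<M}-{i}-{j}. f a)"
    using assms by (intro sum.remove) auto
  finally show ?thesis
    by (simp add: add.assoc Diff_insert2[symmetric])
qed

lemma sum_sum_symmetric_split_pair:
  fixes T :: "nat \<Rightarrow> nat \<Rightarrow> 'a::comm_semiring_1"
  assumes ij: "i \<noteq> j" "i < M" "j < M"
    and sym: "\<And>a b. T a b = T b a" and diag: "\<And>a. T a a = 0"
  shows "(\<Sum>a<M. \<Sum>b<M. T a b) = 2 * T i j + 2 * (\<Sum>b\<in>{..<M}-{i,j}. T i b + T j b)
           + (\<Sum>a\<in>{..<M}-{i,j}. \<Sum>b\<in>{..<M}-{i,j}. T a b)"
proof -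
  let ?A = "{..<M}-{i,j}"
  have "(\<Sum>a<M. \<Sum>b<M. T a b) = (\<Sum>a<M. T a i + T a j + (\<Sum>b\<in>?A. T a b))"
    by (intro sum.cong refl) (rule sum_split_pair[OF ij])
  also have "\<dots> = (T i i + T i j + (\<Sum>b\<in>?A. T i b)) + (T j i + T j j + (\<Sum>b\<in>?A. T j b))
       + (\<Sum>a\<in>?A. T a i + T a j + (\<Sum>b\<in>?A. T a b))"
    by (rule sum_split_pair[OF ij])
  also have "(\<Sum>a\<in>?A. T a i + T a j + (\<Sum>b\<in>?A. T a b))
      = (\<Sum>b\<in>?A. T i b + T j b) + (\<Sum>a\<in>?A. \<Sum>b\<in>?A. T a b)"
    by (simp add: sum.distrib sym)
  finally show ?thesis
    using sym[of j i] by (simp add: diag sum.distrib mult_2 algebra_simps)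
qed

lemma entry_lower_bound_by_mean:
  fixes n :: "nat \<Rightarrow> real"
  assumes "i < M" and mean: "(\<Sum>a<M. n a) = \<rho> * M" and "0 \<le> \<rho>" "\<rho> \<le> 1" "1 \<le> C"
    and gap: "\<And>j. j < M \<Longrightarrow> j \<noteq> i \<Longrightarrow> (n j - n i)\<^sup>2 \<le> C * (n i - (n i)\<^sup>2)"
  shows "\<rho>\<^sup>2 / (4 * C) \<le> n i"
proof (cases "\<rho> / 2 \<le> n i")
  case True
  have "\<rho>\<^sup>2 \<le> 2 * C * \<rho>"
    using assms(3-5) mult_mono[of \<rho> "2 * C" \<rho> \<rho>] by (simp add: power2_eq_square)
  also have "\<dots> \<le> 4 * C * n i"
    using True assms(5) mult_left_mono[of "2 * \<rho>" "4 * n i" C] by simp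
  finally show ?thesis
    using assms(5) by (simp add: pos_divide_le_eq mult.commute)
next
  case False
  obtain j where j: "j < M" "\<rho> \<le> n j"
  proof (rule ccontr)
    assume "\<not> thesis"
    then have "(\<Sum>a<M. n a) < of_nat (card {..<M}) * \<rho>"
      using \<open>i < M\<close> that by (intro sum_bounded_above_strict) force+
    then show False
      using mean by (simp add: mult.commute)
  qed
  then have "(\<rho> / 2)\<^sup>2 \<le> (n j - n i)\<^sup>2"
    using False assms(3) by (intro power_mono) auto
  also have "\<dots> \<le> C * (n i - (n i)\<^sup>2)"
    using gap[of j] j False assms(3) by fastforce
  also have "\<dots> \<le> C * n i"
    using assms(5) by (intro mult_left_mono) auto
  finally show ?thesis
    using assms(5) by (simp add: field_simps power2_eq_square)
qed

definition frame_sqnorm :: "nat \<Rightarrow> (nat \<Rightarrow> complex) \<Rightarrow> real" where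
  "frame_sqnorm N x = (\<Sum>k<N. (cmod (x k))\<^sup>2)"

lemma frame_vnorm_eq_sqrt_sqnorm: "frame_vnorm N x = sqrt (frame_sqnorm N x)"
  by (simp add: frame_vnorm_def frame_sqnorm_def)

lemma frame_inner_commute: "frame_inner N y x = cnj (frame_inner N x y)"
  unfolding frame_inner_def by (simp add: mult.commute)

lemma norm_frame_inner_commute: "cmod (frame_inner N y x) = cmod (frame_inner N x y)"
  by (simp add: frame_inner_commute[of N y x])

lemma frame_inner_self: "frame_inner N x x = complex_of_real (frame_sqnorm N x)"
  unfolding frame_inner_def frame_sqnorm_def by (simp add: complex_norm_square[symmetric])

lemma frame_inner_add_left:
  "frame_inner N (\<lambda>k. x k + y k) z = frame_inner N x z + frame_inner N y z"
  unfolding frame_inner_def by (simp add: sum.distrib distrib_right)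

lemma frame_inner_diff_left:
  "frame_inner N (\<lambda>k. x k - y k) z = frame_inner N x z - frame_inner N y z"
  unfolding frame_inner_def by (simp add: sum_subtractf left_diff_distrib)

lemma frame_inner_diff_right:
  "frame_inner N z (\<lambda>k. x k - y k) = frame_inner N z x - frame_inner N z y"
  unfolding frame_inner_def by (simp add: sum_subtractf right_diff_distrib)

lemma frame_inner_scale_left: "frame_inner N (\<lambda>k. c * x k) z = c * frame_inner N x z"
  unfolding frame_inner_def by (simp add: sum_distrib_left mult.assoc)

lemma frame_inner_scale_right: "frame_inner N z (\<lambda>k. c * x k) = cnj c * frame_inner N z x"
  unfolding frame_inner_def by (simp add: sum_distrib_left algebra_simps)

lemma parseval_frame_sum_sqnorm:
  assumes "Phi \<in> parseval_frames K M N"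
  shows "(\<Sum>a<M. frame_sqnorm N (Phi a)) = real N"
proof -
  have "complex_of_real (\<Sum>a<M. frame_sqnorm N (Phi a)) = (\<Sum>a<M. \<Sum>k<N. Phi a k * cnj (Phi a k))"
    by (simp add: frame_sqnorm_def complex_norm_square[symmetric])
  also have "\<dots> = (\<Sum>k<N. \<Sum>a<M. Phi a k * cnj (Phi a k))"
    by (rule sum.swap)
  also have "\<dots> = of_nat N"
    using assms unfolding parseval_frames_def by simp
  finally show ?thesis
    by (metis of_real_eq_iff of_real_of_nat_eq)
qed

lemma parseval_frame_gram_row:
  assumes "Phi \<in> parseval_frames K M N"
  shows "(\<Sum>b<M. (cmod (frame_inner N (Phi i) (Phi b)))\<^sup>2) = frame_sqnorm N (Phi i)"
proof -
  have parseval: "k < N \<Longrightarrow> l < N \<Longrightarrow>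
      (\<Sum>b<M. Phi b k * cnj (Phi b l)) = (if k = l then 1 else 0)" for k l
    using assms unfolding parseval_frames_def by blast
  have "complex_of_real (\<Sum>b<M. (cmod (frame_inner N (Phi i) (Phi b)))\<^sup>2)
      = (\<Sum>b<M. frame_inner N (Phi i) (Phi b) * cnj (frame_inner N (Phi i) (Phi b)))"
    by (simp add: complex_norm_square[symmetric])
  also have "\<dots> = (\<Sum>b<M. \<Sum>k<N. \<Sum>l<N. Phi b k * (Phi i l * (cnj (Phi b l) * cnj (Phi i k))))"
    unfolding frame_inner_def by (simp add: sum_product algebra_simps)
  also have "\<dots> = (\<Sum>k<N. \<Sum>l<N. Phi i l * cnj (Phi i k) * (\<Sum>b<M. Phi b k * cnj (Phi b l)))"
    by (simp add: sum_distrib_left sum.swap[of _ "{..<M}"] algebra_simps)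
  also have "\<dots> = (\<Sum>k<N. \<Sum>l<N. Phi i l * cnj (Phi i k) * (if k = l then 1 else 0))"
    by (intro sum.cong refl) (simp add: parseval)
  also have "\<dots> = complex_of_real (frame_sqnorm N (Phi i))"
    by (simp add: if_distrib frame_sqnorm_def complex_norm_square[symmetric] cong: if_cong)
  finally show ?thesis
    using of_real_eq_iff by blast
qed

lemma parseval_frame_gram_offdiag_sum_squares:
  assumes "Phi \<in> parseval_frames K M N" and "i < M"
  shows "(\<Sum>b\<in>{..<M}-{i}. (cmod (frame_inner N (Phi i) (Phi b)))\<^sup>2)
           = frame_sqnorm N (Phi i) - (frame_sqnorm N (Phi i))\<^sup>2"
  using parseval_frame_gram_row[OF assms(1), of i] assms(2)
  by (simp add: sum.remove frame_inner_self)

lemma parseval_frame_gram_offdiag_sum_squared_le: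
  assumes "Phi \<in> parseval_frames K M N" and "i < M"
  shows "(\<Sum>b\<in>{..<M}-{i}. cmod (frame_inner N (Phi i) (Phi b)))\<^sup>2
           \<le> real M * (frame_sqnorm N (Phi i) - (frame_sqnorm N (Phi i))\<^sup>2)"
proof -
  let ?B = "{..<M}-{i}"
  have "(\<Sum>b\<in>?B. cmod (frame_inner N (Phi i) (Phi b)))\<^sup>2
      \<le> (\<Sum>b\<in>?B. (cmod (frame_inner N (Phi i) (Phi b)))\<^sup>2) * card ?B"
    by (rule sum_squared_le_sum_of_squares)
  also have "\<dots> \<le> (\<Sum>b\<in>?B. (cmod (frame_inner N (Phi i) (Phi b)))\<^sup>2) * M"
    using card_mono[OF finite_lessThan Diff_subset, of M "{i}"]
    by (intro mult_left_mono sum_nonneg) auto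
  finally show ?thesis
    using parseval_frame_gram_offdiag_sum_squares[OF assms] by (simp add: mult.commute)
qed

definition inv_sqrt2 :: complex where
  "inv_sqrt2 = complex_of_real (sqrt 2 / 2)"

lemma inv_sqrt2_squared: "inv_sqrt2 * inv_sqrt2 = 1 / 2"
  unfolding inv_sqrt2_def by (simp flip: of_real_mult)

lemma cnj_inv_sqrt2 [simp]: "cnj inv_sqrt2 = inv_sqrt2"
  by (simp add: inv_sqrt2_def)

lemma norm_inv_sqrt2: "cmod inv_sqrt2 = sqrt 2 / 2"
  by (simp add: inv_sqrt2_def)

definition rotate_pair :: "(nat \<Rightarrow> nat \<Rightarrow> complex) \<Rightarrow> nat \<Rightarrow> nat \<Rightarrow> nat \<Rightarrow> nat \<Rightarrow> complex" where
  "rotate_pair Phi i j = (\<lambda>a k. if a = i then inv_sqrt2 * (Phi i k + Phi j k)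
                               else if a = j then inv_sqrt2 * (Phi j k - Phi i k) else Phi a k)"

lemma rotate_pair_first: "rotate_pair Phi i j i = (\<lambda>k. inv_sqrt2 * (Phi i k + Phi j k))"
  by (simp add: rotate_pair_def)

lemma rotate_pair_second: "i \<noteq> j \<Longrightarrow> rotate_pair Phi i j j = (\<lambda>k. inv_sqrt2 * (Phi j k - Phi i k))"
  by (auto simp add: rotate_pair_def)

lemma rotate_pair_other: "a \<noteq> i \<Longrightarrow> a \<noteq> j \<Longrightarrow> rotate_pair Phi i j a = Phi a"
  by (auto simp add: rotate_pair_def)

lemma rotate_pair_parseval:
  assumes Phi: "Phi \<in> parseval_frames K M N" and K: "K = \<real> \<or> K = UNIV"
    and ij: "i \<noteq> j" "i < M" "j < M"
  shows "rotate_pair Phi i j \<in> parseval_frames K M N"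
proof -
  let ?Psi = "rotate_pair Phi i j"
  have "\<forall>a<M. \<forall>k<N. Phi a k \<in> K" and "\<forall>a k. (M \<le> a \<or> N \<le> k) \<longrightarrow> Phi a k = 0"
    and "\<forall>k<N. \<forall>l<N. (\<Sum>a<M. Phi a k * cnj (Phi a l)) = (if k = l then 1 else 0)"
    using Phi unfolding parseval_frames_def by blast+
  moreover have "\<forall>a<M. \<forall>k<N. ?Psi a k \<in> K" if "\<forall>a<M. \<forall>k<N. Phi a k \<in> K"
    using K that ij by (auto simp: rotate_pair_def inv_sqrt2_def)
  moreover have "(\<Sum>a<M. ?Psi a k * cnj (?Psi a l)) = (\<Sum>a<M. Phi a k * cnj (Phi a l))" for k l
  proof -
    have "?Psi i k * cnj (?Psi i l) + ?Psi j k * cnj (?Psi j l)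
        = (inv_sqrt2 * inv_sqrt2 * 2) * (Phi i k * cnj (Phi i l) + Phi j k * cnj (Phi j l))"
      using ij by (simp add: rotate_pair_first rotate_pair_second algebra_simps)
    then show ?thesis
      using ij by (simp add: sum_split_pair[OF ij] inv_sqrt2_squared rotate_pair_other)
  qed
  ultimately show ?thesis
    using ij unfolding parseval_frames_def by (simp add: rotate_pair_def)
qed

lemma norm_inner_rotate_pair_center:
  assumes "i \<noteq> j"
  shows "\<bar>frame_sqnorm N (Phi j) - frame_sqnorm N (Phi i)\<bar> / 2 - cmod (frame_inner N (Phi i) (Phi j))
           \<le> cmod (frame_inner N (rotate_pair Phi i j i) (rotate_pair Phi i j j))"
proof -
  define G where "G a b = frame_inner N (Phi a) (Phi b)" for a b
  define \<Delta> where "\<Delta> = complex_of_real ((frame_sqnorm N (Phi j) - frame_sqnorm N (Phi i)) / 2)"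
  have "frame_inner N (rotate_pair Phi i j i) (rotate_pair Phi i j j)
      = inv_sqrt2 * cnj inv_sqrt2 * ((G i j - G i i) + (G j j - G j i))"
    using assms unfolding G_def
    by (simp add: rotate_pair_first rotate_pair_second frame_inner_scale_left
        frame_inner_scale_right frame_inner_add_left frame_inner_diff_right algebra_simps)
  also have "\<dots> = (G i j - G j i) / 2 + \<Delta>"
    by (simp add: inv_sqrt2_squared G_def \<Delta>_def frame_inner_self field_simps)
  finally have "\<Delta> = frame_inner N (rotate_pair Phi i j i) (rotate_pair Phi i j j) - (G i j - G j i) / 2"
    by simp
  then have "cmod \<Delta> \<le> cmod (frame_inner N (rotate_pair Phi i j i) (rotate_pair Phi i j j))
      + cmod (G i j - G j i) / 2"
    using norm_triangle_ineq4 by (metis norm_divide norm_numeral)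
  moreover have "cmod (G i j - G j i) \<le> 2 * cmod (G i j)"
    using norm_triangle_ineq4[of "G i j" "G j i"] norm_frame_inner_commute unfolding G_def by simp
  moreover have "cmod \<Delta> = \<bar>frame_sqnorm N (Phi j) - frame_sqnorm N (Phi i)\<bar> / 2"
    unfolding \<Delta>_def norm_of_real by simp
  ultimately show ?thesis
    unfolding G_def by linarith
qed

text \<open>This holds because phi_j = (psi_i + psi_j) / sqrt 2 for the rotated vectors psi.\<close>
lemma norm_inner_rotate_pair_other:
  assumes "b \<noteq> i" "b \<noteq> j" "i \<noteq> j"
  shows "cmod (frame_inner N (Phi j) (Phi b))
           \<le> cmod (frame_inner N (rotate_pair Phi i j i) (Phi b))
             + cmod (frame_inner N (rotate_pair Phi i j j) (Phi b))"
proof -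
  define x where "x = frame_inner N (Phi i) (Phi b)"
  define y where "y = frame_inner N (Phi j) (Phi b)"
  have rotated: "frame_inner N (rotate_pair Phi i j i) (Phi b) = inv_sqrt2 * (x + y)"
    "frame_inner N (rotate_pair Phi i j j) (Phi b) = inv_sqrt2 * (y - x)"
    using assms unfolding x_def y_def
    by (simp_all add: rotate_pair_first rotate_pair_second rotate_pair_other
        frame_inner_scale_left frame_inner_add_left frame_inner_diff_left)
  have "cmod y \<le> sqrt 2 / 2 * (2 * cmod y)"
    using mult_right_mono[of 1 "sqrt 2 / 2 * 2" "cmod y"] by (simp add: real_le_rsqrt)
  also have "\<dots> \<le> sqrt 2 / 2 * (cmod (x + y) + cmod (y - x))"
    using norm_triangle_ineq[of "x + y" "y - x"] by (intro mult_left_mono) auto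
  also have "\<dots> = cmod (frame_inner N (rotate_pair Phi i j i) (Phi b))
             + cmod (frame_inner N (rotate_pair Phi i j j) (Phi b))"
    unfolding rotated norm_mult norm_inv_sqrt2 by (rule distrib_left)
  finally show ?thesis
    unfolding y_def .
qed

lemma total_coherence_rotate_pair_gain:
  assumes ij: "i \<noteq> j" "i < M" "j < M"
  shows "\<bar>frame_sqnorm N (Phi j) - frame_sqnorm N (Phi i)\<bar>
           - 4 * (\<Sum>b\<in>{..<M}-{i}. cmod (frame_inner N (Phi i) (Phi b)))
         \<le> total_coherence M N (rotate_pair Phi i j) - total_coherence M N Phi"
proof -
  define Psi where "Psi = rotate_pair Phi i j"
  define T where "T Xi a b = (if a \<noteq> b then cmod (frame_inner N (Xi a) (Xi b)) else 0)"
    for Xi :: "nat \<Rightarrow> nat \<Rightarrow> complex" and a b :: nat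
  define S where "S = (\<Sum>b\<in>{..<M}-{i}. cmod (frame_inner N (Phi i) (Phi b)))"
  let ?A = "{..<M}-{i,j}"
  have split: "total_coherence M N Xi = 2 * T Xi i j + 2 * (\<Sum>b\<in>?A. T Xi i b + T Xi j b)
      + (\<Sum>a\<in>?A. \<Sum>b\<in>?A. T Xi a b)" for Xi
    unfolding total_coherence_def T_def[symmetric]
    by (rule sum_sum_symmetric_split_pair[OF ij]) (auto simp: T_def norm_frame_inner_commute)
  have "(\<Sum>a\<in>?A. \<Sum>b\<in>?A. T Psi a b) = (\<Sum>a\<in>?A. \<Sum>b\<in>?A. T Phi a b)"
    by (intro sum.cong refl) (simp add: T_def Psi_def rotate_pair_other)
  moreover have "\<bar>frame_sqnorm N (Phi j) - frame_sqnorm N (Phi i)\<bar> / 2 - T Phi i j \<le> T Psi i j"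
    using norm_inner_rotate_pair_center[OF ij(1)] ij(1) by (simp add: T_def Psi_def)
  moreover have "(\<Sum>b\<in>?A. T Phi i b + T Phi j b)
      \<le> (\<Sum>b\<in>?A. T Psi i b + T Psi j b) + (\<Sum>b\<in>?A. T Phi i b)"
  proof -
    have "T Phi j b \<le> T Psi i b + T Psi j b" if "b \<in> ?A" for b
      using that norm_inner_rotate_pair_other[of b i j N Phi] ij(1)
      by (simp add: T_def Psi_def rotate_pair_other)
    then have "(\<Sum>b\<in>?A. T Phi i b + T Phi j b) \<le> (\<Sum>b\<in>?A. T Psi i b + T Psi j b + T Phi i b)"
      by (intro sum_mono) (simp add: add.commute add_left_mono)
    then show ?thesis
      by (simp add: sum.distrib)
  qed
  moreover have "S = T Phi i j + (\<Sum>b\<in>?A. T Phi i b)"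
  proof -
    have "S = (\<Sum>b\<in>{..<M}-{i}. T Phi i b)"
      unfolding S_def T_def by (intro sum.cong) auto
    also have "\<dots> = T Phi i j + (\<Sum>b\<in>{..<M}-{i}-{j}. T Phi i b)"
      using ij by (intro sum.remove) auto
    finally show ?thesis
      by (simp add: Diff_insert2[symmetric])
  qed
  moreover have "0 \<le> T Phi i j" "0 \<le> (\<Sum>b\<in>?A. T Phi i b)"
    by (auto simp: T_def intro: sum_nonneg)
  ultimately show ?thesis
    unfolding split Psi_def[symmetric] S_def[symmetric] by argo
qed

lemma total_coherence_maximizer_sqnorm_gap:
  assumes Phi: "Phi \<in> parseval_frames K M N" and K: "K = \<real> \<or> K = UNIV"
    and max: "\<forall>Psi \<in> parseval_frames K M N. total_coherence M N Psi \<le> total_coherence M N Phi"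
    and ij: "i \<noteq> j" "i < M" "j < M"
  shows "(frame_sqnorm N (Phi j) - frame_sqnorm N (Phi i))\<^sup>2
           \<le> 16 * real M * (frame_sqnorm N (Phi i) - (frame_sqnorm N (Phi i))\<^sup>2)"
proof -
  define S where "S = (\<Sum>b\<in>{..<M}-{i}. cmod (frame_inner N (Phi i) (Phi b)))"
  have "total_coherence M N (rotate_pair Phi i j) \<le> total_coherence M N Phi"
    using max rotate_pair_parseval[OF Phi K ij] by blast
  then have "\<bar>frame_sqnorm N (Phi j) - frame_sqnorm N (Phi i)\<bar> \<le> 4 * S"
    using total_coherence_rotate_pair_gain[OF ij, of N Phi] unfolding S_def by linarith
  then have "\<bar>frame_sqnorm N (Phi j) - frame_sqnorm N (Phi i)\<bar>\<^sup>2 \<le> (4 * S)\<^sup>2"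
    by (intro power_mono) auto
  then have "(frame_sqnorm N (Phi j) - frame_sqnorm N (Phi i))\<^sup>2 \<le> 16 * S\<^sup>2"
    by (simp add: power_mult_distrib)
  also have "\<dots> \<le> 16 * real M * (frame_sqnorm N (Phi i) - (frame_sqnorm N (Phi i))\<^sup>2)"
    using parseval_frame_gram_offdiag_sum_squared_le[OF Phi ij(2)] unfolding S_def by linarith
  finally show ?thesis .
qed

lemma total_coherence_maximizer_sqnorm_bounds:
  assumes K: "K = \<real> \<or> K = UNIV" and "0 < N" "N < M"
    and Phi: "Phi \<in> parseval_frames K M N"
    and max: "\<forall>Psi \<in> parseval_frames K M N. total_coherence M N Psi \<le> total_coherence M N Phi"
    and i: "i < M"
  shows "(real N / M)\<^sup>2 / (64 * M) \<le> frame_sqnorm N (Phi i)"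
    and "(1 - real N / M)\<^sup>2 / (64 * M) \<le> 1 - frame_sqnorm N (Phi i)"
proof -
  define \<rho> where "\<rho> = real N / M"
  define n where "n a = frame_sqnorm N (Phi a)" for a
  have M: "1 \<le> real M" and \<rho>: "0 \<le> \<rho>" "\<rho> \<le> 1"
    using assms by (auto simp: \<rho>_def)
  have C: "1 \<le> 16 * real M"
    using M by simp
  have gap: "(n j - n i)\<^sup>2 \<le> 16 * real M * (n i - (n i)\<^sup>2)" if "j < M" "j \<noteq> i" for j
    using total_coherence_maximizer_sqnorm_gap[OF Phi K max] that i unfolding n_def by auto
  have mean: "(\<Sum>a<M. n a) = \<rho> * M"
    using parseval_frame_sum_sqnorm[OF Phi] M unfolding n_def \<rho>_def by simp
  show "(real N / M)\<^sup>2 / (64 * M) \<le> frame_sqnorm N (Phi i)"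
    using entry_lower_bound_by_mean[OF i mean \<rho> C gap] unfolding \<rho>_def n_def by simp
  have mean': "(\<Sum>a<M. 1 - n a) = (1 - \<rho>) * M"
    using mean by (simp add: sum_subtractf algebra_simps)
  have gap': "((1 - n j) - (1 - n i))\<^sup>2 \<le> 16 * real M * ((1 - n i) - (1 - n i)\<^sup>2)"
    if "j < M" "j \<noteq> i" for j
    using gap[OF that] by (simp add: power2_eq_square algebra_simps)
  show "(1 - real N / M)\<^sup>2 / (64 * M) \<le> 1 - frame_sqnorm N (Phi i)"
    using entry_lower_bound_by_mean[OF i mean' _ _ C gap'] \<rho> unfolding \<rho>_def n_def by simp
qed

theorem theorem4:
  fixes K :: "complex set" and M N :: nat
  assumes "K = \<real> \<or> K = UNIV"
    and "0 < N" and "N < M"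
  shows "\<exists>c d. 0 < c \<and> c \<le> d \<and> d < 1 \<and>
           (\<forall>Phi \<in> parseval_frames K M N.
              (\<forall>Psi \<in> parseval_frames K M N. total_coherence M N Psi \<le> total_coherence M N Phi)
              \<longrightarrow> (\<forall>i<M. c \<le> frame_vnorm N (Phi i) \<and> frame_vnorm N (Phi i) \<le> d))"
proof -
  define \<rho> where "\<rho> = real N / M"
  define \<epsilon> where "\<epsilon> = min (\<rho>\<^sup>2) ((1 - \<rho>)\<^sup>2) / (64 * M)"
  have \<rho>: "0 < \<rho>" "\<rho> < 1"
    using assms by (simp_all add: \<rho>_def field_simps)
  have "min (\<rho>\<^sup>2) ((1 - \<rho>)\<^sup>2) \<le> 1"
    using \<rho> by (simp add: min.coboundedI1 power_le_one)
  then have "0 < \<epsilon>" and "\<epsilon> \<le> 1 / 2"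
    using \<rho> assms(3) by (simp_all add: \<epsilon>_def field_simps)
  moreover have "\<epsilon> \<le> frame_sqnorm N (Phi i) \<and> frame_sqnorm N (Phi i) \<le> 1 - \<epsilon>"
    if "Phi \<in> parseval_frames K M N"
      and "\<forall>Psi \<in> parseval_frames K M N. total_coherence M N Psi \<le> total_coherence M N Phi"
      and "i < M" for Phi i
  proof -
    have "\<epsilon> \<le> \<rho>\<^sup>2 / (64 * M)" and "\<epsilon> \<le> (1 - \<rho>)\<^sup>2 / (64 * M)"
      unfolding \<epsilon>_def by (simp_all add: divide_right_mono)
    then show ?thesis
      using total_coherence_maximizer_sqnorm_bounds[OF assms that] unfolding \<rho>_def by linarith
  qed
  ultimately show ?thesis
    unfolding frame_vnorm_eq_sqrt_sqnorm
    by (intro exI[of _ "sqrt \<epsilon>"] exI[of _ "sqrt (1 - \<epsilon>)"]) auto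
qed

end
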